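(* Let $\{a_n[e^{-x}]\}_L=\{2^{-n}\}=1,\tfrac12,\tfrac14,\dots$. Then \[ \{a_n[e^{-x}]\}_L=\sum_{k=0}^{\infty}(-1)^k\{a_n[x^k/k!]\}_R , \] where for each index $n$ the (in general divergent) series $\sum_{k\ge0}(-1)^k a_n[x^k/k!]_R$ is interpreted as an Abel sum, i.e. its value is $\lim_{t\to1^-}\sum_{k\ge0}(-1)^k a_n[x^k/k!]_R\,t^k$.
   Context: Sequences are indexed by $n=0,1,2,\dots$. The right integral is $\mathcal{I}_R^0\{a_n\}=\{\sum_{j=0}^{n}a_j\}$. Define $\{a_n[x^0/0!]\}_R=\{1\}$, $\{a_n[x^1/1!]\}_R=\{n\}=0,1,2,\dots$, and for $k\ge2$, $\{a_n[x^k/k!]\}_R=(\mathcal{I}_R^0)^{k-1}\{n\}$; $a_n[x^k/k!]_R$ denotes the $n$-th term of $\{a_n[x^k/k!]\}_R$. *)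

theory Defs
  imports Complex_Main
begin

definition right_integral :: "(nat \<Rightarrow> real) \<Rightarrow> (nat \<Rightarrow> real)" where
  "right_integral a = (\<lambda>n. \<Sum>j\<le>n. a j)"

text \<open>The sequence {a_n[x^k/k!]}_R: {1} for k = 0, {n} for k = 1,
  and (I_R)^(k-1) {n} for k >= 2.\<close>
definition mono_seq_R :: "nat \<Rightarrow> nat \<Rightarrow> real" where
  "mono_seq_R k = (if k = 0 then (\<lambda>n. 1)
                   else if k = 1 then (\<lambda>n. real n)
                   else (right_integral ^^ (k - 1)) (\<lambda>n. real n))"

definition exp_neg_seq_L :: "nat \<Rightarrow> real" where
  "exp_neg_seq_L n = (1/2) ^ n"

definition abel_sums :: "(nat \<Rightarrow> real) \<Rightarrow> real \<Rightarrow> bool" where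
  "abel_sums f s \<longleftrightarrow>
     (\<forall>t::real. 0 \<le> t \<and> t < 1 \<longrightarrow> summable (\<lambda>k. f k * t ^ k)) \<and>
     ((\<lambda>t. \<Sum>k. f k * t ^ k) \<longlongrightarrow> s) (at_left 1)"

end

theory Submission
  imports Defs "HOL-Analysis.Generalised_Binomial_Theorem"
begin

text \<open>By Pascal's rule, iterating the right integral on \<open>{n}\<close> gives
  \<open>a\<^sub>n[x\<^sup>k/k!]\<^sub>R = C(n+k-1, k)\<close>, and \<open>(-1)\<^sup>k C(n+k-1, k) = C(-n, k)\<close>.
  So the power series in the Abel sum is Newton's binomial series of \<open>(1 + t) powr -n\<close>,
  which converges for \<open>0 \<le> t < 1\<close> and tends to \<open>2 powr -n\<close> as \<open>t\<close> tends to \<open>1\<close> from the left.\<close>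

lemma right_integral_0 [simp]: "right_integral a 0 = a 0"
  by (simp add: right_integral_def)

lemma right_integral_Suc [simp]: "right_integral a (Suc n) = right_integral a n + a (Suc n)"
  by (simp add: right_integral_def)

lemma funpow_right_integral_of_nat:
  "(right_integral ^^ m) real n = real ((n + m) choose Suc m)"
proof (induction m arbitrary: n)
  case 0
  then show ?case by simp
next
  case (Suc m)
  note outer_IH = Suc.IH
  show ?case
  proof (induction n)
    case 0
    then show ?case using outer_IH by simp
  next
    case (Suc n)
    then show ?case
      using outer_IH[of "Suc n"] binomial_Suc_Suc[of "n + Suc m" "Suc m"] by simp
  qed
qed

lemma mono_seq_R_eq_binomial: "mono_seq_R k n = real ((n + k - 1) choose k)"
proof -
  consider "k = 0" | "k = 1" | "k \<ge> 2" by linarith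
  then show ?thesis
  proof cases
    case 3
    then have "n + (k - 1) = n + k - 1" "Suc (k - 1) = k" by auto
    with 3 show ?thesis by (simp add: mono_seq_R_def funpow_right_integral_of_nat)
  qed (simp_all add: mono_seq_R_def)
qed

lemma signed_mono_seq_R_eq_gbinomial: "(-1) ^ k * mono_seq_R k n = (- real n) gchoose k"
proof (cases "k = 0")
  case False
  then have "real k - - real n - 1 = real (n + k - 1)" by simp
  then show ?thesis
    using gbinomial_negated_upper[of "- real n" k]
    by (simp add: mono_seq_R_eq_binomial binomial_gbinomial)
qed (simp add: mono_seq_R_def)

lemma abel_sumsI:
  assumes "\<And>t. 0 \<le> t \<Longrightarrow> t < 1 \<Longrightarrow> (\<lambda>k. f k * t ^ k) sums g t"
    and "(g \<longlongrightarrow> s) (at_left 1)"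
  shows "abel_sums f s"
proof -
  have "eventually (\<lambda>t. t \<in> {0<..<1}) (at_left (1::real))"
    by (rule eventually_at_left_real) simp
  then have "eventually (\<lambda>t. (\<Sum>k. f k * t ^ k) = g t) (at_left (1::real))"
  proof eventually_elim
    case (elim t)
    then have "(\<lambda>k. f k * t ^ k) sums g t"
      by (intro assms(1)) auto
    then show ?case
      by (rule sums_unique[symmetric])
  qed
  then have "((\<lambda>t. \<Sum>k. f k * t ^ k) \<longlongrightarrow> s) (at_left 1)"
    using assms(2) by (simp add: tendsto_cong)
  moreover have "summable (\<lambda>k. f k * t ^ k)" if "0 \<le> t" "t < 1" for t :: real
    using assms(1)[OF that] by (rule sums_summable)
  ultimately show ?thesis
    unfolding abel_sums_def by blast
qed

lemma abel_sums_gbinomial: "abel_sums (\<lambda>k. a gchoose k) (2 powr a)"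
proof (rule abel_sumsI)
  show "(\<lambda>k. (a gchoose k) * t ^ k) sums (1 + t) powr a" if "0 \<le> t" "t < 1" for t :: real
    using gen_binomial_real[of t a] that by simp
  have "((\<lambda>t. (1 + t) powr a) \<longlongrightarrow> (1 + 1) powr a) (at_left (1::real))"
    by (intro tendsto_intros) auto
  then show "((\<lambda>t. (1 + t) powr a) \<longlongrightarrow> 2 powr a) (at_left 1)"
    by simp
qed

theorem mainTheorem11:
  shows "\<forall>n::nat. abel_sums (\<lambda>k. (-1) ^ k * mono_seq_R k n) (exp_neg_seq_L n)"
proof
  fix n :: nat
  have "2 powr - real n = exp_neg_seq_L n"
    by (simp add: exp_neg_seq_L_def powr_minus powr_realpow power_divide inverse_eq_divide)
  moreover have "abel_sums (\<lambda>k. (-1) ^ k * mono_seq_R k n) (2 powr - real n)"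
    using abel_sums_gbinomial[of "- real n"] by (simp only: signed_mono_seq_R_eq_gbinomial)
  ultimately show "abel_sums (\<lambda>k. (-1) ^ k * mono_seq_R k n) (exp_neg_seq_L n)"
    by simp
qed

end
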